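(* Assume $k\ge 2$, $\epsilon\in(0,1)$, $\delta\in(0,1)$, and $B\ge 108\,\frac{k}{\epsilon^3}\log k$. Let $\gamma=\frac{\epsilon^2}{36\log k}$. Run the pre-processing algorithm with per-color budget $B'=1/\gamma$ (assumed to be an integer), obtaining $T$; let $\tilde C=\{c\in C: f_c(T)<\mathrm{OPT}\}$ and $\tilde f_c(A)=f_c(A\cup T)$ for $c\in\tilde C$; then run Algorithm 2 with failure parameter $\delta$ on the functions $(\tilde f_c)_{c\in\tilde C}$ with budget $\tilde B=B-|T|$, obtaining $\tilde S$ (take $\tilde S=\emptyset$ if $\tilde C=\emptyset$). Then with probability at least $1-\delta$, \[ \min_{c\in C} f_c(T\cup\tilde S)\;\ge\;\left(1-\frac1e-\epsilon\right)\mathrm{OPT}, \] and $|T\cup\tilde S|\le B$.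
   Context: Setup: $V$ is a finite nonempty ground set, $C$ is a finite nonempty set of "colors", $k=|C|$. For each $c\in C$, $f_c\colon 2^V\to\mathbb{R}_{\ge 0}$ is monotone and submodular. $B$ is a positive integer (the budget). $f(T\mid S)=f(S\cup T)-f(S)$ and $f(v\mid S)=f(\{v\}\mid S)$. $\mathrm{OPT}=\max_{S\subseteq V,\,|S|\le B}\min_{c\in C} f_c(S)$. $\Delta_V$ is the probability simplex over $V$; $\log$ is the natural logarithm. Pre-processing algorithm (input: the $f_c$ and a per-color budget $B'$): set $T=\emptyset$; for each color $c\in C$, repeat $B'$ times: pick $v\in\arg\max_{v\in V} f_c(v\mid T)$ and set $T=T\cup\{v\}$. Output $T$. For a family of monotone submodular functions $(g_c)_{c\in D}$ on $V$ and budget $b$, $\mathrm{LP}(S)$ is: maximize $\xi$ subject to $\sum_{v\in V} x_v\,(b\, g_c(v\mid S)+g_c(S))\ge \xi$ for all $c\in D$, $x\in\Delta_V$. Algorithm 2 (input: $(g_c)_{c\in D}$, $b$, $\delta$): set $S_{\mathrm{best}}=\emptyset$; repeat, with independent randomness, $\lceil\log_2(2/\delta)\rceil$ times: $S^{(0)}=\emptyset$; for $i=1,\dots,b$: let $x^{(i)}$ be an optimal solution of $\mathrm{LP}(S^{(i-1)})$, sample $v^{(i)}\sim x^{(i)}$, $S^{(i)}=S^{(i-1)}\cup\{v^{(i)}\}$; if $\min_c g_c(S^{(b)})\ge\min_c g_c(S_{\mathrm{best}})$ set $S_{\mathrm{best}}=S^{(b)}$. Output $S_{\mathrm{best}}$.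 *)

theory Defs
  imports "HOL-Probability.Probability"
begin

definition marg :: "('v set \<Rightarrow> real) \<Rightarrow> 'v set \<Rightarrow> 'v set \<Rightarrow> real" where
  "marg h T S = h (S \<union> T) - h S"

definition mono_submod :: "'v set \<Rightarrow> ('v set \<Rightarrow> real) \<Rightarrow> bool" where
  "mono_submod V h \<longleftrightarrow>
     (\<forall>A. A \<subseteq> V \<longrightarrow> 0 \<le> h A) \<and>
     (\<forall>A B. A \<subseteq> B \<and> B \<subseteq> V \<longrightarrow> h A \<le> h B) \<and>
     (\<forall>A B. A \<subseteq> V \<and> B \<subseteq> V \<longrightarrow> h (A \<union> B) + h (A \<inter> B) \<le> h A + h B)"

definition OPT :: "'v set \<Rightarrow> 'c set \<Rightarrow> ('c \<Rightarrow> 'v set \<Rightarrow> real) \<Rightarrow> nat \<Rightarrow> real" where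
  "OPT V C f B = Max {Min ((\<lambda>c. f c S) ` C) | S. S \<subseteq> V \<and> card S \<le> B}"

definition greedy_choice :: "'v set \<Rightarrow> ('v set \<Rightarrow> real) \<Rightarrow> 'v set \<Rightarrow> 'v \<Rightarrow> bool" where
  "greedy_choice V h T v \<longleftrightarrow> v \<in> V \<and> (\<forall>u\<in>V. marg h {u} T \<le> marg h {v} T)"

(* B' greedy steps for a single colour c, using the tie-breaking selector sel *)
primrec greedy_color :: "('c \<Rightarrow> 'v set \<Rightarrow> 'v) \<Rightarrow> 'c \<Rightarrow> nat \<Rightarrow> 'v set \<Rightarrow> 'v set" where
  "greedy_color sel c 0 T = T"
| "greedy_color sel c (Suc n) T = (let T' = greedy_color sel c n T in insert (sel c T') T')"

definition preprocess :: "('c \<Rightarrow> 'v set \<Rightarrow> 'v) \<Rightarrow> 'c list \<Rightarrow> nat \<Rightarrow> 'v set" where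
  "preprocess sel cs B' = fold (\<lambda>c T. greedy_color sel c B' T) cs {}"

definition prob_simplex :: "'v set \<Rightarrow> ('v \<Rightarrow> real) set" where
  "prob_simplex V = {x. (\<forall>v\<in>V. 0 \<le> x v) \<and> (\<Sum>v\<in>V. x v) = 1}"

(* objective of LP(S) at x: the largest feasible \<xi>, i.e. min over colours *)
definition lp_obj :: "'v set \<Rightarrow> ('c \<Rightarrow> 'v set \<Rightarrow> real) \<Rightarrow> 'c set \<Rightarrow> nat \<Rightarrow> 'v set \<Rightarrow> ('v \<Rightarrow> real) \<Rightarrow> real" where
  "lp_obj V g D b S x = Min ((\<lambda>c. \<Sum>v\<in>V. x v * (real b * marg (g c) {v} S + g c S)) ` D)"

definition lp_optimal :: "'v set \<Rightarrow> ('c \<Rightarrow> 'v set \<Rightarrow> real) \<Rightarrow> 'c set \<Rightarrow> nat \<Rightarrow> 'v set \<Rightarrow> ('v \<Rightarrow> real) \<Rightarrow> bool" where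
  "lp_optimal V g D b S x \<longleftrightarrow> x \<in> prob_simplex V \<and> (\<forall>y\<in>prob_simplex V. lp_obj V g D b S y \<le> lp_obj V g D b S x)"

definition sample :: "'v set \<Rightarrow> ('v \<Rightarrow> real) \<Rightarrow> 'v pmf" where
  "sample V x = embed_pmf (\<lambda>v. if v \<in> V then x v else 0)"

(* one run of the inner loop: i sampling rounds, sol S being the chosen optimal solution of LP(S) *)
primrec alg2_run :: "'v set \<Rightarrow> ('v set \<Rightarrow> 'v \<Rightarrow> real) \<Rightarrow> nat \<Rightarrow> 'v set pmf" where
  "alg2_run V sol 0 = return_pmf {}"
| "alg2_run V sol (Suc i) =
     bind_pmf (alg2_run V sol i) (\<lambda>S. map_pmf (\<lambda>v. insert v S) (sample V (sol S)))"

primrec alg2_rep :: "'v set \<Rightarrow> ('c \<Rightarrow> 'v set \<Rightarrow> real) \<Rightarrow> 'c set \<Rightarrow> nat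
                      \<Rightarrow> ('v set \<Rightarrow> 'v \<Rightarrow> real) \<Rightarrow> nat \<Rightarrow> 'v set pmf" where
  "alg2_rep V g D b sol 0 = return_pmf {}"
| "alg2_rep V g D b sol (Suc j) =
     bind_pmf (alg2_rep V g D b sol j) (\<lambda>Sbest.
       bind_pmf (alg2_run V sol b) (\<lambda>S.
         return_pmf (if Min ((\<lambda>c. g c Sbest) ` D) \<le> Min ((\<lambda>c. g c S) ` D) then S else Sbest)))"

definition alg2 :: "'v set \<Rightarrow> ('c \<Rightarrow> 'v set \<Rightarrow> real) \<Rightarrow> 'c set \<Rightarrow> nat \<Rightarrow> real
                     \<Rightarrow> ('v set \<Rightarrow> 'v \<Rightarrow> real) \<Rightarrow> 'v set pmf" where
  "alg2 V g D b \<delta> sol = alg2_rep V g D b sol (nat \<lceil>log 2 (2 / \<delta>)\<rceil>)"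

end

theory Submission
  imports Defs
begin

(* The greedy pre-processing leaves every marginal f_c(v | T) at most f_c(T) / B'. Hence for each
   colour c with f_c(T) < OPT the residual function A |-> f_c(A \<union> T) has marginals at most
   gamma * OPT, while T uses only an epsilon/3 fraction of the budget. Comparing an optimal LP
   solution with the uniform distribution on an optimal set gives, in every sampling round of
   Algorithm 2, the drift E[g_c(S + v)] - g_c(S) >= (a - g_c(S)) / b with a = (b / B) OPT. Drift
   and bounded increments make exp(lambda_i (a - g_c(S_i))), for suitably increasing lambda_i, a
   supermartingale, so by Markov's inequality one run ends below (1 - 1/e - epsilon) OPT in colour
   c with probability at most 1/k^2. A union bound gives failure probability 1/2 per run, and
   ceil(log_2 (2/delta)) independent repetitions reduce it to delta. *)

section \<open>Monotone submodular functions\<close>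

lemma mono_submod_nonneg: "mono_submod V h \<Longrightarrow> A \<subseteq> V \<Longrightarrow> 0 \<le> h A"
  unfolding mono_submod_def by blast

lemma mono_submod_mono: "mono_submod V h \<Longrightarrow> A \<subseteq> B \<Longrightarrow> B \<subseteq> V \<Longrightarrow> h A \<le> h B"
  unfolding mono_submod_def by blast

lemma mono_submod_submod:
  "mono_submod V h \<Longrightarrow> A \<subseteq> V \<Longrightarrow> B \<subseteq> V \<Longrightarrow> h (A \<union> B) + h (A \<inter> B) \<le> h A + h B"
  unfolding mono_submod_def by blast

lemma marg_singleton: "marg h {v} S = h (insert v S) - h S"
  by (simp add: marg_def)

lemma marg_singleton_nonneg:
  "mono_submod V h \<Longrightarrow> S \<subseteq> V \<Longrightarrow> v \<in> V \<Longrightarrow> 0 \<le> marg h {v} S"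
  unfolding marg_singleton using mono_submod_mono[of V h S "insert v S"] by auto

lemma marg_singleton_antimono:
  assumes h: "mono_submod V h" and AB: "A \<subseteq> B" "B \<subseteq> V" and v: "v \<in> V"
  shows "marg h {v} B \<le> marg h {v} A"
proof (cases "v \<in> B")
  case True
  then show ?thesis
    using marg_singleton_nonneg[OF h _ v, of A] AB by (simp add: marg_singleton insert_absorb)
next
  case False
  have "insert v A \<union> B = insert v B" "insert v A \<inter> B = A"
    using AB False by auto
  then have "h (insert v B) + h A \<le> h (insert v A) + h B"
    using mono_submod_submod[OF h, of "insert v A" B] AB v by auto
  then show ?thesis unfolding marg_singleton by linarith
qed

lemma mono_submod_Un_le_sum_marg:
  assumes h: "mono_submod V h" and A: "finite A" "A \<subseteq> V" and S: "S \<subseteq> V"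
  shows "h (S \<union> A) - h S \<le> (\<Sum>v\<in>A. marg h {v} S)"
  using A
proof (induction A rule: finite_induct)
  case empty
  then show ?case by simp
next
  case (insert a A)
  have "marg h {a} (S \<union> A) \<le> marg h {a} S"
    using marg_singleton_antimono[OF h, of S "S \<union> A" a] insert S by auto
  then show ?case using insert by (simp add: marg_singleton)
qed

lemma mono_submod_Un_right:
  assumes h: "mono_submod V h" and T: "T \<subseteq> V"
  shows "mono_submod V (\<lambda>A. h (A \<union> T))"
  unfolding mono_submod_def
proof (intro conjI allI impI)
  fix A assume "A \<subseteq> V"
  then show "0 \<le> h (A \<union> T)" using mono_submod_nonneg[OF h] T by simp
next
  fix A B assume "A \<subseteq> B \<and> B \<subseteq> V"
  then show "h (A \<union> T) \<le> h (B \<union> T)"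
    using mono_submod_mono[OF h] T by (meson Un_mono le_sup_iff order_refl)
next
  fix A B assume "A \<subseteq> V \<and> B \<subseteq> V"
  moreover have "(A \<union> T) \<union> (B \<union> T) = (A \<union> B) \<union> T" and "(A \<union> T) \<inter> (B \<union> T) = (A \<inter> B) \<union> T"
    by auto
  ultimately show "h ((A \<union> B) \<union> T) + h ((A \<inter> B) \<union> T) \<le> h (A \<union> T) + h (B \<union> T)"
    using mono_submod_submod[OF h, of "A \<union> T" "B \<union> T"] T by auto
qed

lemma OPT_attained:
  assumes "finite V"
  obtains S where "S \<subseteq> V" "card S \<le> B" "Min ((\<lambda>c. f c S) ` C) = OPT V C f B"
proof -
  let ?feasible = "{S. S \<subseteq> V \<and> card S \<le> B}"
  let ?value = "\<lambda>S. Min ((\<lambda>c. f c S) ` C)"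
  have "finite ?feasible" by (rule finite_subset[of _ "Pow V"]) (use assms in auto)
  moreover have "{} \<in> ?feasible" by simp
  ultimately have "Max (?value ` ?feasible) \<in> ?value ` ?feasible"
    by (intro Max_in) auto
  moreover have "OPT V C f B = Max (?value ` ?feasible)"
    unfolding OPT_def by (rule arg_cong[where f = Max]) auto
  ultimately have "OPT V C f B \<in> ?value ` ?feasible" by simp
  then obtain S where S: "S \<in> ?feasible" and opt: "OPT V C f B = ?value S" by (rule imageE)
  show ?thesis by (rule that[of S]) (use S opt in simp_all)
qed

lemma OPT_nonneg:
  assumes "finite V" and "finite C" and "C \<noteq> {}" and "\<forall>c\<in>C. mono_submod V (f c)"
  shows "0 \<le> OPT V C f B"
proof -
  obtain S where S: "S \<subseteq> V" "Min ((\<lambda>c. f c S) ` C) = OPT V C f B"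
    using OPT_attained[OF assms(1)] by blast
  show ?thesis
    unfolding S(2)[symmetric] using assms(2-4) mono_submod_nonneg[OF _ S(1)] by (simp add: Min_ge_iff)
qed

section \<open>Greedy pre-processing\<close>

lemma card_insert_le_Suc: "card (insert x A) \<le> Suc (card A)"
  by (cases "finite A") (auto simp: card_insert_if)

lemma greedy_color_subset:
  assumes sel: "\<forall>T\<subseteq>V. greedy_choice V h T (sel c T)" and T0: "T0 \<subseteq> V"
  shows "T0 \<subseteq> greedy_color sel c n T0 \<and> greedy_color sel c n T0 \<subseteq> V"
proof (induction n)
  case 0
  then show ?case using T0 by simp
next
  case (Suc n)
  then have "sel c (greedy_color sel c n T0) \<in> V"
    using sel unfolding greedy_choice_def by blast
  with Suc show ?case by (auto simp: Let_def)
qed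

lemma card_greedy_color_le: "card (greedy_color sel c n T0) \<le> card T0 + n"
  by (induction n) (auto simp: Let_def intro: order.trans[OF card_insert_le_Suc])

lemma greedy_color_marg_le:
  assumes h: "mono_submod V h" and sel: "\<forall>T\<subseteq>V. greedy_choice V h T (sel c T)"
    and T0: "T0 \<subseteq> V" and v: "v \<in> V"
  shows "real n * marg h {v} (greedy_color sel c n T0) \<le> h (greedy_color sel c n T0) - h T0"
proof (induction n)
  case 0
  then show ?case by simp
next
  case (Suc n)
  define G where "G = greedy_color sel c n T0"
  define w where "w = sel c G"
  have G: "G \<subseteq> V" using greedy_color_subset[of V h sel c T0 n] sel T0 by (simp add: G_def)
  have w: "w \<in> V" and best: "marg h {v} G \<le> marg h {w} G"
    using sel G v unfolding greedy_choice_def w_def by auto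
  have step: "greedy_color sel c (Suc n) T0 = insert w G" by (simp add: G_def w_def Let_def)
  have anti: "marg h {v} (insert w G) \<le> marg h {v} G"
    using marg_singleton_antimono[OF h _ _ v] G w by blast
  have "real (Suc n) * marg h {v} (insert w G) \<le> real n * marg h {v} G + marg h {v} G"
    using mult_left_mono[OF anti, of "real n"] anti by (simp add: algebra_simps)
  also have "\<dots> \<le> h G - h T0 + marg h {w} G" using Suc.IH best unfolding G_def by linarith
  also have "\<dots> = h (insert w G) - h T0" by (simp add: marg_singleton)
  finally show ?case unfolding step .
qed

lemma fold_greedy_color_subset:
  assumes "\<forall>c\<in>set cs. \<forall>T\<subseteq>V. greedy_choice V (f c) T (sel c T)" and "X \<subseteq> V"
  shows "X \<subseteq> fold (\<lambda>c. greedy_color sel c n) cs X \<and> fold (\<lambda>c. greedy_color sel c n) cs X \<subseteq> V"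
  using assms
proof (induction cs arbitrary: X)
  case Nil
  then show ?case by simp
next
  case (Cons c cs)
  then have "X \<subseteq> greedy_color sel c n X" "greedy_color sel c n X \<subseteq> V"
    using greedy_color_subset[of V "f c" sel c X n] by auto
  then show ?case using Cons.IH[of "greedy_color sel c n X"] Cons.prems by auto
qed

lemma card_fold_greedy_color_le:
  "card (fold (\<lambda>c. greedy_color sel c n) cs X) \<le> card X + length cs * n"
proof (induction cs arbitrary: X)
  case (Cons c cs)
  have "card (fold (\<lambda>c. greedy_color sel c n) cs (greedy_color sel c n X))
      \<le> card (greedy_color sel c n X) + length cs * n"
    by (rule Cons.IH)
  then show ?case using card_greedy_color_le[of sel c n X] by simp
qed simp

lemma preprocess_subset:
  "\<forall>c\<in>set cs. \<forall>T\<subseteq>V. greedy_choice V (f c) T (sel c T) \<Longrightarrow> preprocess sel cs B' \<subseteq> V"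
  using fold_greedy_color_subset[of cs V f sel "{}" B'] by (simp add: preprocess_def)

lemma card_preprocess_le: "card (preprocess sel cs B') \<le> length cs * B'"
  using card_fold_greedy_color_le[of sel B' cs "{}"] by (simp add: preprocess_def)

lemma preprocess_marg_le:
  assumes ms: "\<forall>c\<in>set cs. mono_submod V (f c)"
    and sel: "\<forall>c\<in>set cs. \<forall>T\<subseteq>V. greedy_choice V (f c) T (sel c T)"
    and c: "c \<in> set cs" and v: "v \<in> V"
  shows "real B' * marg (f c) {v} (preprocess sel cs B') \<le> f c (preprocess sel cs B')"
proof -
  obtain xs ys where cs: "cs = xs @ c # ys" using split_list[OF c] by blast
  define F where "F = (\<lambda>c. greedy_color sel c B')"
  define X0 where "X0 = fold F xs {}"
  define X1 where "X1 = F c X0"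
  have T: "preprocess sel cs B' = fold F ys X1" by (simp add: preprocess_def cs F_def X0_def X1_def)
  have fc: "mono_submod V (f c)" "\<forall>T\<subseteq>V. greedy_choice V (f c) T (sel c T)" using ms sel c by auto
  have X0: "X0 \<subseteq> V"
    using fold_greedy_color_subset[of xs V f sel "{}"] sel cs by (simp add: X0_def F_def)
  have X1: "X1 \<subseteq> V"
    using greedy_color_subset[of V "f c" sel c X0 B'] fc(2) X0 by (simp add: X1_def F_def)
  have Y: "X1 \<subseteq> fold F ys X1" "fold F ys X1 \<subseteq> V"
    using fold_greedy_color_subset[of ys V f sel X1] sel cs X1 by (auto simp: F_def)
  have "real B' * marg (f c) {v} (fold F ys X1) \<le> real B' * marg (f c) {v} X1"
    using marg_singleton_antimono[OF fc(1) Y v] by (simp add: mult_left_mono)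
  also have "\<dots> \<le> f c X1 - f c X0"
    using greedy_color_marg_le[where sel = sel and c = c, OF fc X0 v] by (simp add: X1_def F_def)
  also have "\<dots> \<le> f c (fold F ys X1)"
    using mono_submod_nonneg[OF fc(1) X0] mono_submod_mono[OF fc(1) Y] by linarith
  finally show ?thesis unfolding T .
qed

lemma preprocess_guarantees:
  assumes ms: "\<forall>c\<in>C. mono_submod V (f c)" and sel: "\<forall>c\<in>C. \<forall>T\<subseteq>V. greedy_choice V (f c) T (sel c T)"
    and cs: "distinct cs" "set cs = C" and k: "2 \<le> card C" and \<epsilon>: "0 < \<epsilon>"
    and B: "108 * real (card C) / \<epsilon> ^ 3 * ln (real (card C)) \<le> real B"
    and B': "real B' = 1 / (\<epsilon> ^ 2 / (36 * ln (real (card C))))"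
  shows "preprocess sel cs B' \<subseteq> V"
    and "real (card (preprocess sel cs B')) \<le> \<epsilon> / 3 * real B"
    and "\<forall>c\<in>C. \<forall>v\<in>V. real B' * marg (f c) {v} (preprocess sel cs B') \<le> f c (preprocess sel cs B')"
proof -
  have ms': "\<forall>c\<in>set cs. mono_submod V (f c)"
    and sel': "\<forall>c\<in>set cs. \<forall>T\<subseteq>V. greedy_choice V (f c) T (sel c T)"
    using ms sel cs(2) by simp_all
  show "preprocess sel cs B' \<subseteq> V" by (rule preprocess_subset[OF sel'])
  show "\<forall>c\<in>C. \<forall>v\<in>V. real B' * marg (f c) {v} (preprocess sel cs B') \<le> f c (preprocess sel cs B')"
    using preprocess_marg_le[OF ms' sel'] cs(2) by simp
  have "card (preprocess sel cs B') \<le> card C * B'"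
    using card_preprocess_le[of sel cs B'] distinct_card[OF cs(1)] cs(2) by simp
  then have "real (card (preprocess sel cs B')) \<le> real (card C) * real B'"
    by (metis of_nat_le_iff of_nat_mult)
  also have "\<dots> = \<epsilon> / 3 * (108 * real (card C) / \<epsilon> ^ 3 * ln (real (card C)))"
    using \<epsilon> by (simp add: B' field_simps power3_eq_cube power2_eq_square)
  also have "\<dots> \<le> \<epsilon> / 3 * real B" using B \<epsilon> by (intro mult_left_mono) auto
  finally show "real (card (preprocess sel cs B')) \<le> \<epsilon> / 3 * real B" .
qed

section \<open>Sampling runs of Algorithm 2\<close>

lemma pmf_sample:
  assumes V: "finite V" and x: "x \<in> prob_simplex V"
  shows "pmf (sample V x) v = (if v \<in> V then x v else 0)"
proof -
  let ?p = "\<lambda>v. if v \<in> V then x v else 0"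
  have nonneg: "\<And>v. 0 \<le> ?p v" using x unfolding prob_simplex_def by auto
  have "(\<integral>\<^sup>+v. ennreal (?p v) \<partial>count_space UNIV) = (\<Sum>v\<in>V. ennreal (?p v))"
    by (rule nn_integral_count_space'[OF V]) auto
  also have "\<dots> = ennreal (\<Sum>v\<in>V. ?p v)" using nonneg by (intro sum_ennreal) blast
  also have "(\<Sum>v\<in>V. ?p v) = 1" using x unfolding prob_simplex_def by simp
  finally show ?thesis unfolding sample_def using pmf_embed_pmf[of ?p, OF nonneg] by simp
qed

lemma set_pmf_sample:
  assumes "finite V" and "x \<in> prob_simplex V"
  shows "set_pmf (sample V x) \<subseteq> V"
  using pmf_sample[OF assms] by (auto simp: set_pmf_eq)

lemma expectation_sample:
  assumes V: "finite V" and x: "x \<in> prob_simplex V"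
  shows "measure_pmf.expectation (sample V x) F = (\<Sum>v\<in>V. x v * F v)"
proof -
  have "measure_pmf.expectation (sample V x) F = (\<Sum>v\<in>V. F v * pmf (sample V x) v)"
    using set_pmf_sample[OF V x] by (intro integral_measure_pmf_real[OF V]) auto
  also have "\<dots> = (\<Sum>v\<in>V. x v * F v)" using pmf_sample[OF V x] by (intro sum.cong) auto
  finally show ?thesis .
qed

lemma set_pmf_alg2_run:
  assumes V: "finite V" and sol: "\<forall>S\<subseteq>V. sol S \<in> prob_simplex V"
  shows "S \<in> set_pmf (alg2_run V sol i) \<Longrightarrow> S \<subseteq> V \<and> card S \<le> i"
proof (induction i arbitrary: S)
  case 0
  then show ?case by simp
next
  case (Suc i)
  then obtain S0 v where S0: "S0 \<in> set_pmf (alg2_run V sol i)"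
    and v: "v \<in> set_pmf (sample V (sol S0))" and S: "S = insert v S0" by auto
  have "S0 \<subseteq> V" "card S0 \<le> i" using Suc.IH[OF S0] by auto
  moreover have "v \<in> V" using set_pmf_sample[OF V] sol \<open>S0 \<subseteq> V\<close> v by blast
  ultimately show ?case using S card_insert_le_Suc[of v S0] by auto
qed

lemma finite_set_pmf_alg2_run:
  assumes "finite V" and "\<forall>S\<subseteq>V. sol S \<in> prob_simplex V"
  shows "finite (set_pmf (alg2_run V sol i))"
  by (rule finite_subset[of _ "Pow V"]) (use set_pmf_alg2_run[OF assms] assms(1) in auto)

lemma expectation_alg2_run_le:
  assumes V: "finite V" and sol: "\<forall>S\<subseteq>V. sol S \<in> prob_simplex V"
    and step: "\<forall>i<n. \<forall>S\<subseteq>V. (\<Sum>v\<in>V. sol S v * \<Phi> (Suc i) (insert v S)) \<le> \<Phi> i S"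
  shows "i \<le> n \<Longrightarrow> measure_pmf.expectation (alg2_run V sol i) (\<Phi> i) \<le> \<Phi> 0 {}"
proof (induction i)
  case 0
  then show ?case by simp
next
  case (Suc i)
  have sup: "set_pmf (alg2_run V sol i) \<subseteq> Pow V" using set_pmf_alg2_run[OF V sol] by auto
  have fin: "finite (set_pmf (map_pmf (\<lambda>v. insert v S) (sample V (sol S))))" if "S \<in> Pow V" for S
    using set_pmf_sample[OF V] sol that V by (auto intro: finite_subset)
  have "measure_pmf.expectation (alg2_run V sol (Suc i)) (\<Phi> (Suc i))
     = (\<Sum>S\<in>Pow V. pmf (alg2_run V sol i) S *\<^sub>R
          measure_pmf.expectation (map_pmf (\<lambda>v. insert v S) (sample V (sol S))) (\<Phi> (Suc i)))"
    unfolding alg2_run.simps using V by (intro pmf_expectation_bind fin sup) auto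
  also have "\<dots> = (\<Sum>S\<in>Pow V. pmf (alg2_run V sol i) S * (\<Sum>v\<in>V. sol S v * \<Phi> (Suc i) (insert v S)))"
    using sol by (intro sum.cong refl) (simp add: expectation_sample[OF V])
  also have "\<dots> \<le> (\<Sum>S\<in>Pow V. pmf (alg2_run V sol i) S * \<Phi> i S)"
    using step Suc.prems by (intro sum_mono mult_left_mono) auto
  also have "\<dots> = measure_pmf.expectation (alg2_run V sol i) (\<Phi> i)"
    using sup V by (subst integral_measure_pmf_real[of "Pow V"]) (auto simp: mult.commute)
  also have "\<dots> \<le> \<Phi> 0 {}" using Suc by simp
  finally show ?case .
qed

section \<open>Exponential moments under drift\<close>

lemma exp_neg_le_chord:
  fixes l X M :: real
  assumes "0 \<le> l" "0 \<le> X" "X \<le> M" "0 < M"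
  shows "exp (- (l * X)) \<le> 1 - X * ((1 - exp (- (l * M))) / M)"
proof -
  define t where "t = X / M"
  have t: "0 \<le> t" "t \<le> 1" using assms by (auto simp: t_def)
  have "exp (l * ((1 - t) *\<^sub>R 0 + t *\<^sub>R (- M))) \<le> (1 - t) * exp (l * 0) + t * exp (l * (- M))"
    using convex_onD[OF convex_on_exp[OF assms(1)] t] by blast
  moreover have "(1 - t) *\<^sub>R 0 + t *\<^sub>R (- M) = - X" using assms by (simp add: t_def)
  ultimately show ?thesis by (simp add: t_def algebra_simps diff_divide_distrib)
qed

lemma one_minus_exp_neg_ge:
  fixes y :: real
  assumes "0 \<le> y"
  shows "y / (1 + y) \<le> 1 - exp (- y)"
proof -
  have "exp (- y) \<le> 1 / (1 + y)"
    using exp_ge_add_one_self[of y] assms by (simp add: exp_minus field_simps)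
  moreover have "y / (1 + y) = 1 - 1 / (1 + y)" using assms by (simp add: field_simps)
  ultimately show ?thesis by linarith
qed

lemma sum_exp_neg_le:
  assumes V: "finite V" and x: "x \<in> prob_simplex V"
    and X: "\<forall>v\<in>V. 0 \<le> X v \<and> X v \<le> M" and M: "0 < M" and l: "0 \<le> l" "l * M \<le> u"
  shows "(\<Sum>v\<in>V. x v * exp (- (l * X v))) \<le> exp (- (l / (1 + u) * (\<Sum>v\<in>V. x v * X v)))"
proof -
  define E where "E = (\<Sum>v\<in>V. x v * X v)"
  define \<kappa> where "\<kappa> = (1 - exp (- (l * M))) / M"
  have x0: "\<forall>v\<in>V. 0 \<le> x v" and x1: "(\<Sum>v\<in>V. x v) = 1" using x unfolding prob_simplex_def by auto
  have E0: "0 \<le> E" unfolding E_def using x0 X by (intro sum_nonneg) auto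
  have "0 \<le> l * M" using l M by simp
  then have "l / (1 + u) \<le> l / (1 + l * M)"
    using l by (intro divide_left_mono) (auto intro!: mult_pos_pos)
  also have "\<dots> = (l * M / (1 + l * M)) / M" using M by simp
  also have "\<dots> \<le> \<kappa>"
    unfolding \<kappa>_def using one_minus_exp_neg_ge[of "l * M"] l M by (intro divide_right_mono) auto
  finally have slope: "l / (1 + u) \<le> \<kappa>" .
  have "(\<Sum>v\<in>V. x v * exp (- (l * X v))) \<le> (\<Sum>v\<in>V. x v * (1 - X v * \<kappa>))"
    unfolding \<kappa>_def using x0 X exp_neg_le_chord[OF l(1) _ _ M] by (intro sum_mono mult_left_mono) auto
  also have "\<dots> = 1 - \<kappa> * E"
    by (simp add: E_def x1 algebra_simps sum_subtractf sum_distrib_left)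
  also have "\<dots> \<le> 1 - l / (1 + u) * E" using mult_right_mono[OF slope E0] by simp
  also have "\<dots> \<le> exp (- (l / (1 + u) * E))" using exp_ge_add_one_self[of "- (l / (1 + u) * E)"] by simp
  finally show ?thesis unfolding E_def .
qed

lemma sum_exp_drift_le:
  assumes V: "finite V" and x: "x \<in> prob_simplex V"
    and X: "\<forall>v\<in>V. 0 \<le> X v \<and> X v \<le> M" and M: "0 < M" and l: "0 \<le> l" "l * M \<le> u"
    and b: "0 < b" and drift: "a \<le> b * (\<Sum>v\<in>V. x v * X v) + h"
  shows "(\<Sum>v\<in>V. x v * exp (l * (a - (h + X v)))) \<le> exp ((1 - 1 / ((1 + u) * b)) * l * (a - h))"
proof -
  define E where "E = (\<Sum>v\<in>V. x v * X v)"
  have u: "0 \<le> u" using l M by (metis mult_nonneg_nonneg less_imp_le order_trans)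
  have "exp (l * (a - (h + X v))) = exp (l * (a - h)) * exp (- (l * X v))" for v
    by (simp add: algebra_simps flip: exp_add)
  then have "(\<Sum>v\<in>V. x v * exp (l * (a - (h + X v))))
      = exp (l * (a - h)) * (\<Sum>v\<in>V. x v * exp (- (l * X v)))"
    by (simp add: sum_distrib_left mult.left_commute)
  also have "\<dots> \<le> exp (l * (a - h)) * exp (- (l / (1 + u) * E))"
    unfolding E_def by (rule mult_left_mono[OF sum_exp_neg_le[OF V x X M l]]) simp
  also have "\<dots> = exp (l * (a - h) - l / (1 + u) * E)"
    by (simp add: exp_diff exp_minus divide_inverse)
  also have "\<dots> \<le> exp ((1 - 1 / ((1 + u) * b)) * l * (a - h))"
  proof -
    have "a \<le> b * E + h" using drift unfolding E_def .
    then have "(a - h) / b \<le> E" using b by (simp add: divide_le_eq mult.commute)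
    then have "l / (1 + u) * ((a - h) / b) \<le> l / (1 + u) * E" using l u by (intro mult_left_mono) auto
    moreover have "(1 - 1 / ((1 + u) * b)) * l * (a - h) = l * (a - h) - l / (1 + u) * ((a - h) / b)"
      by (simp add: algebra_simps)
    ultimately show ?thesis unfolding exp_le_cancel_iff by linarith
  qed
  finally show ?thesis .
qed

lemma prob_below_le_exp_moment:
  assumes "finite (set_pmf P)" and "0 \<le> L"
  shows "measure_pmf.prob P {x. h x < \<tau>}
           \<le> measure_pmf.expectation P (\<lambda>x. exp (L * (a - h x))) / exp (L * (a - \<tau>))"
proof -
  have "measure_pmf.prob P {x. h x < \<tau>}
      \<le> measure_pmf.prob P {x \<in> space (measure_pmf P). exp (L * (a - \<tau>)) \<le> exp (L * (a - h x))}"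
    using assms(2) by (intro measure_pmf.finite_measure_mono) (auto intro: mult_left_mono)
  also have "\<dots> \<le> measure_pmf.expectation P (\<lambda>x. exp (L * (a - h x))) / exp (L * (a - \<tau>))"
    using assms(1) by (intro integral_Markov_inequality_measure integrable_measure_pmf_finite) auto
  finally show ?thesis .
qed

lemma prob_alg2_run_below:
  assumes V: "finite V" and sol: "\<forall>S\<subseteq>V. sol S \<in> prob_simplex V"
    and h0: "0 \<le> h {}"
    and incr: "\<forall>S\<subseteq>V. \<forall>v\<in>V. 0 \<le> marg h {v} S \<and> marg h {v} S \<le> M" and M: "0 < M"
    and drift: "\<forall>S\<subseteq>V. a \<le> real b * (\<Sum>v\<in>V. sol S v * marg h {v} S) + h S"
    and b: "0 < b" and u: "0 \<le> u" and a: "0 \<le> a"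
  shows "measure_pmf.prob (alg2_run V sol b) {S. h S < \<tau>}
           \<le> exp (u / M * (exp (- (1 / (1 + u))) * a - a + \<tau>))"
proof -
  define q where "q = 1 / (1 + u)"
  define r where "r = 1 - 1 / ((1 + u) * real b)"
  define L where "L = u / M"
  \<comment> \<open>the weights \<open>L * r ^ (b - i)\<close> grow just fast enough to make \<open>\<Phi>\<close> a supermartingale\<close>
  define \<Phi> where "\<Phi> = (\<lambda>i S. exp (L * r ^ (b - i) * (a - h S)))"
  have "0 \<le> q" "q \<le> 1" "1 \<le> real b" using u b by (auto simp: q_def)
  then have q: "0 \<le> q" "q \<le> real b" by linarith+
  have r: "r = 1 - q / real b" by (simp add: r_def q_def)
  have r01: "0 \<le> r" "r \<le> 1" using q b by (auto simp: r field_simps)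
  have L: "0 \<le> L" using u M by (simp add: L_def)
  have step: "\<forall>i<b. \<forall>S\<subseteq>V. (\<Sum>v\<in>V. sol S v * \<Phi> (Suc i) (insert v S)) \<le> \<Phi> i S"
  proof (intro allI impI)
    fix i S assume i: "i < b" and S: "S \<subseteq> V"
    define l where "l = L * r ^ (b - Suc i)"
    have l: "0 \<le> l" using L r01 by (simp add: l_def)
    have "l * M = u * r ^ (b - Suc i)" using M by (simp add: l_def L_def)
    also have "\<dots> \<le> u" using u r01 by (simp add: mult_left_le power_le_one)
    finally have lM: "l * M \<le> u" .
    have "(\<Sum>v\<in>V. sol S v * exp (l * (a - (h S + marg h {v} S))))
        \<le> exp (r * l * (a - h S))"
      unfolding r_def using sol S incr drift b by (intro sum_exp_drift_le[OF V _ _ M l lM]) auto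
    moreover have "b - i = Suc (b - Suc i)" using i by simp
    then have "r * l = L * r ^ (b - i)" by (simp add: l_def)
    ultimately show "(\<Sum>v\<in>V. sol S v * \<Phi> (Suc i) (insert v S)) \<le> \<Phi> i S"
      unfolding \<Phi>_def l_def by (simp add: marg_singleton)
  qed
  have "measure_pmf.expectation (alg2_run V sol b) (\<Phi> b) \<le> \<Phi> 0 {}"
    by (rule expectation_alg2_run_le[OF V sol step]) simp
  also have "\<dots> \<le> exp (L * exp (- q) * a)"
  proof -
    have "r ^ b \<le> exp (- q)" unfolding r using exp_ge_one_minus_x_over_n_power_n q b by blast
    then have "L * r ^ b * a \<le> L * exp (- q) * a" using L a by (intro mult_right_mono mult_left_mono) auto
    moreover have "L * r ^ b * (a - h {}) \<le> L * r ^ b * a" using L r01 h0 by (intro mult_left_mono) auto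
    ultimately have "L * r ^ b * (a - h {}) \<le> L * exp (- q) * a" by linarith
    then show ?thesis by (simp add: \<Phi>_def)
  qed
  finally have expectation: "measure_pmf.expectation (alg2_run V sol b) (\<lambda>S. exp (L * (a - h S)))
      \<le> exp (L * exp (- q) * a)" by (simp add: \<Phi>_def)
  have "measure_pmf.prob (alg2_run V sol b) {S. h S < \<tau>}
      \<le> measure_pmf.expectation (alg2_run V sol b) (\<lambda>S. exp (L * (a - h S))) / exp (L * (a - \<tau>))"
    by (rule prob_below_le_exp_moment[OF finite_set_pmf_alg2_run[OF V sol] L])
  also have "\<dots> \<le> exp (L * exp (- q) * a) / exp (L * (a - \<tau>))"
    using expectation by (simp add: divide_right_mono)
  also have "\<dots> = exp (L * (exp (- q) * a - a + \<tau>))"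
    by (simp add: algebra_simps flip: exp_diff)
  finally show ?thesis unfolding L_def q_def .
qed

section \<open>The LP step\<close>

lemma sum_uniform_weights:
  assumes "finite V" and "A \<subseteq> V"
  shows "(\<Sum>v\<in>V. indicator A v / real (card A) * F v) = (\<Sum>v\<in>A. F v) / real (card A)"
proof -
  have "(\<Sum>v\<in>V. indicator A v / real (card A) * F v) = (\<Sum>v\<in>V. if v \<in> A then F v / real (card A) else 0)"
    by (intro sum.cong) (auto simp: indicator_def)
  also have "\<dots> = (\<Sum>v\<in>V \<inter> A. F v / real (card A))"
    using assms(1) by (simp add: sum.inter_restrict)
  also have "V \<inter> A = A" using assms(2) by blast
  finally show ?thesis by (simp add: sum_divide_distrib)
qed

lemma uniform_weights_in_prob_simplex:
  assumes "finite V" and "A \<subseteq> V" and "A \<noteq> {}"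
  shows "(\<lambda>v. indicator A v / real (card A)) \<in> prob_simplex V"
  using sum_uniform_weights[OF assms(1,2), of "\<lambda>_. 1"] assms finite_subset[OF assms(2,1)]
  by (simp add: prob_simplex_def)

lemma lp_obj_uniform_ge:
  assumes V: "finite V" and D: "finite D" "D \<noteq> {}" and ms: "\<forall>c\<in>D. mono_submod V (h c)"
    and Sst: "Sst \<subseteq> V" "Sst \<noteq> {}" "card Sst \<le> B" and bB: "b \<le> B"
    and Ov: "0 \<le> Ov" "\<forall>c\<in>D. Ov \<le> h c Sst" and S: "S \<subseteq> V"
  shows "real b / real B * Ov \<le> lp_obj V h D b S (\<lambda>v. indicator Sst v / real (card Sst))"
  unfolding lp_obj_def
proof (subst Min_ge_iff; (intro ballI)?)
  fix t assume "t \<in> (\<lambda>c. \<Sum>v\<in>V. indicator Sst v / real (card Sst) * (real b * marg (h c) {v} S + h c S)) ` D"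
  then obtain d where d: "d \<in> D"
    and t: "t = (\<Sum>v\<in>V. indicator Sst v / real (card Sst) * (real b * marg (h d) {v} S + h d S))"
    by blast
  define m where "m = real (card Sst)"
  define P where "P = (\<Sum>v\<in>Sst. marg (h d) {v} S)"
  define H where "H = h d S"
  define \<theta> where "\<theta> = real b / real B"
  have hd: "mono_submod V (h d)" using ms d by blast
  have finS: "finite Sst" using finite_subset[OF Sst(1) V] .
  have m: "1 \<le> m" "m \<le> real B" using Sst finS by (auto simp: m_def Suc_le_eq card_gt_0_iff)
  have "t = (\<Sum>v\<in>Sst. real b * marg (h d) {v} S + h d S) / m"
    unfolding t m_def by (rule sum_uniform_weights[OF V Sst(1)])
  also have "\<dots> = real b / m * P + H"
    using m by (simp add: P_def H_def m_def sum.distrib field_simps flip: sum_distrib_left)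
  finally have t: "t = real b / m * P + H" .
  have P: "0 \<le> P" unfolding P_def using marg_singleton_nonneg[OF hd S] Sst by (intro sum_nonneg) auto
  have H: "0 \<le> H" unfolding H_def using mono_submod_nonneg[OF hd S] .
  have "Ov \<le> h d (S \<union> Sst)" using Ov d mono_submod_mono[OF hd, of Sst "S \<union> Sst"] Sst S by force
  then have OvPH: "Ov \<le> P + H"
    using mono_submod_Un_le_sum_marg[OF hd finS Sst(1) S] unfolding P_def H_def by linarith
  have \<theta>: "\<theta> \<le> 1" "\<theta> \<le> real b / m" "0 \<le> \<theta>"
    using bB m by (auto simp: \<theta>_def divide_le_eq_1 intro: divide_left_mono)
  have "\<theta> * Ov \<le> \<theta> * P + \<theta> * H" using OvPH \<theta>(3) by (simp add: distrib_left[symmetric] mult_left_mono)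
  also have "\<dots> \<le> real b / m * P + H" using \<theta> P H by (intro add_mono mult_right_mono mult_left_le_one_le) auto
  finally show "real b / real B * Ov \<le> t" unfolding t \<theta>_def .
qed (use D in auto)

lemma lp_optimal_drift:
  assumes V: "finite V" and D: "finite D" "c \<in> D" and ms: "\<forall>d\<in>D. mono_submod V (h d)"
    and Sst: "Sst \<subseteq> V" "card Sst \<le> B" and bB: "b \<le> B"
    and Ov: "0 \<le> Ov" "\<forall>d\<in>D. Ov \<le> h d Sst"
    and S: "S \<subseteq> V" and opt: "lp_optimal V h D b S x"
  shows "real b / real B * Ov \<le> real b * (\<Sum>v\<in>V. x v * marg (h c) {v} S) + h c S"
proof -
  have x: "x \<in> prob_simplex V" using opt unfolding lp_optimal_def by blast
  then have x0: "\<forall>v\<in>V. 0 \<le> x v" and x1: "(\<Sum>v\<in>V. x v) = 1" unfolding prob_simplex_def by auto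
  have hc: "mono_submod V (h c)" using ms D by blast
  have "lp_obj V h D b S x \<le> (\<Sum>v\<in>V. x v * (real b * marg (h c) {v} S + h c S))"
    unfolding lp_obj_def using D by (intro Min_le) auto
  also have "\<dots> = real b * (\<Sum>v\<in>V. x v * marg (h c) {v} S) + h c S"
    by (simp add: x1 sum.distrib sum_distrib_left algebra_simps flip: sum_distrib_right)
  finally have obj: "lp_obj V h D b S x \<le> real b * (\<Sum>v\<in>V. x v * marg (h c) {v} S) + h c S" .
  show ?thesis
  proof (cases "Sst = {}")
    case True
    have "real b / real B \<le> 1" using bB by (auto simp: divide_le_eq_1)
    then have "real b / real B * Ov \<le> Ov" using Ov(1) by (intro mult_left_le_one_le) auto
    also have "\<dots> \<le> h c S" using Ov D True mono_submod_mono[OF hc _ S] by fastforce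
    also have "\<dots> \<le> real b * (\<Sum>v\<in>V. x v * marg (h c) {v} S) + h c S"
      using x0 marg_singleton_nonneg[OF hc S] by (simp add: sum_nonneg)
    finally show ?thesis .
  next
    case False
    have "real b / real B * Ov \<le> lp_obj V h D b S (\<lambda>v. indicator Sst v / real (card Sst))"
      using D by (intro lp_obj_uniform_ge[OF V _ _ ms Sst(1) False Sst(2) bB Ov S]) auto
    also have "\<dots> \<le> lp_obj V h D b S x"
      using opt uniform_weights_in_prob_simplex[OF V Sst(1) False] unfolding lp_optimal_def by blast
    finally show ?thesis using obj by linarith
  qed
qed

section \<open>Independent repetitions\<close>

lemma set_pmf_alg2_rep:
  assumes V: "finite V" and sol: "\<forall>S\<subseteq>V. sol S \<in> prob_simplex V"
  shows "S \<in> set_pmf (alg2_rep V g D b sol j) \<Longrightarrow> S \<subseteq> V \<and> card S \<le> b"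
proof (induction j arbitrary: S)
  case 0
  then show ?case by simp
next
  case (Suc j)
  then show ?case using set_pmf_alg2_run[OF V sol] by (auto split: if_splits)
qed

text \<open>Each repetition keeps the better of the previous best set and a fresh independent run, so its
  result is below the threshold only if both are.\<close>

lemma prob_alg2_rep_below:
  assumes run: "measure_pmf.prob (alg2_run V sol b) {S. Min ((\<lambda>c. g c S) ` D) < \<tau>} \<le> p"
  shows "measure_pmf.prob (alg2_rep V g D b sol j) {S. Min ((\<lambda>c. g c S) ` D) < \<tau>} \<le> p ^ j"
proof (induction j)
  case 0
  then show ?case by (simp add: measure_pmf.prob_le_1)
next
  case (Suc j)
  define m where "m = (\<lambda>S. Min ((\<lambda>c. g c S) ` D))"
  define Bad where "Bad = {S. m S < \<tau>}"
  define keep_best where "keep_best = (\<lambda>(Sb, S). if m Sb \<le> m S then S else Sb)"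
  define P where "P = alg2_rep V g D b sol j"
  define R where "R = alg2_run V sol b"
  have p: "0 \<le> p" using run measure_nonneg order_trans by blast
  have "alg2_rep V g D b sol (Suc j) = map_pmf keep_best (pair_pmf P R)"
    by (simp add: P_def R_def keep_best_def m_def pair_pmf_def map_bind_pmf)
  then have "measure_pmf.prob (alg2_rep V g D b sol (Suc j)) Bad
      = measure_pmf.prob (pair_pmf P R) (keep_best -` Bad \<inter> set_pmf (pair_pmf P R))"
    by (simp only: measure_map_pmf measure_Int_set_pmf)
  also have "\<dots> \<le> measure_pmf.prob (pair_pmf P R) ((Bad \<inter> set_pmf P) \<times> (Bad \<inter> set_pmf R))"
    by (rule measure_pmf.finite_measure_mono) (auto simp: keep_best_def Bad_def split: if_splits)
  also have "\<dots> = measure_pmf.prob P (Bad \<inter> set_pmf P) * measure_pmf.prob R (Bad \<inter> set_pmf R)"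
    by (intro measure_pmf_prob_product countable_Int2 countable_set_pmf)
  also have "\<dots> = measure_pmf.prob P Bad * measure_pmf.prob R Bad" by (simp add: measure_Int_set_pmf)
  also have "\<dots> \<le> p ^ j * p"
    using Suc.IH run p by (intro mult_mono) (auto simp: P_def R_def Bad_def m_def)
  finally show ?case by (simp add: Bad_def m_def mult.commute)
qed

lemma half_power_ceiling_log_le:
  fixes \<delta> :: real
  assumes "0 < \<delta>"
  shows "(1 / 2) ^ nat \<lceil>log 2 (2 / \<delta>)\<rceil> \<le> \<delta>"
proof -
  define R where "R = nat \<lceil>log 2 (2 / \<delta>)\<rceil>"
  have "2 / \<delta> = 2 powr (log 2 (2 / \<delta>))" using assms by simp
  also have "\<dots> \<le> 2 powr (real R)" unfolding R_def by (intro powr_mono) linarith+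
  also have "\<dots> = 2 ^ R" by (simp add: powr_realpow)
  finally have "2 \<le> \<delta> * 2 ^ R" using assms by (simp add: divide_le_eq mult.commute)
  then have "1 \<le> \<delta> * 2 ^ R" by linarith
  then show ?thesis unfolding R_def by (simp add: power_one_over divide_le_eq mult.commute)
qed
section \<open>Numerical estimates\<close>

lemma exp_neg_inverse_one_plus_le:
  fixes u :: real
  assumes "0 \<le> u"
  shows "exp (- (1 / (1 + u))) \<le> (1 + u) / exp 1"
proof -
  define q where "q = 1 / (1 + u)"
  have q: "0 < q" using assms by (simp add: q_def)
  have "q \<le> exp (q - 1)" using exp_ge_add_one_self[of "q - 1"] by simp
  then have "exp (1 - q) \<le> 1 / q" using q by (simp add: exp_diff field_simps)
  moreover have "exp (- q) = exp (1 - q) / exp 1" by (simp add: exp_diff exp_minus field_simps)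
  ultimately show ?thesis by (simp add: q_def divide_right_mono)
qed

text \<open>This is where the constants \<open>36\<close> and \<open>108\<close> of the theorem come from: they make the
  exponent of the per-colour tail bound at most \<open>-2 ln k\<close>.\<close>

lemma concentration_exponent_le:
  fixes \<epsilon> K Ov a :: real
  assumes \<epsilon>: "0 < \<epsilon>" "\<epsilon> < 1" and K: "0 < K" and Ov: "0 < Ov" and a: "(1 - \<epsilon> / 3) * Ov \<le> a"
  shows "\<epsilon> / 2 / (\<epsilon> ^ 2 / (36 * K) * Ov)
           * (exp (- (1 / (1 + \<epsilon> / 2))) * a - a + (1 - 1 / exp 1 - \<epsilon>) * Ov) \<le> - (2 * K)"
proof -
  define u where "u = \<epsilon> / 2"
  define e where "e = 1 / exp (1::real)"
  have u: "0 < u" "u \<le> 1 / 2" using \<epsilon> by (auto simp: u_def)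
  have "2 \<le> exp (1::real)" using exp_ge_add_one_self[of 1] by simp
  then have e: "0 < e" "e \<le> 1 / 2" by (simp_all add: e_def)
  have "(1 + u) * e \<le> 3 / 2 * (1 / 2)" using u e by (intro mult_mono) auto
  then have neg: "(1 + u) * e - 1 \<le> 0" by simp
  have "0 \<le> (1 - \<epsilon> / 3) * Ov" using \<epsilon> Ov by simp
  then have a0: "0 \<le> a" using a by linarith
  have "exp (- (1 / (1 + u))) * a \<le> (1 + u) * e * a"
    using exp_neg_inverse_one_plus_le[of u] u a0 by (intro mult_right_mono) (auto simp: e_def)
  moreover have "((1 + u) * e - 1) * a = (1 + u) * e * a - a" by (simp add: algebra_simps)
  ultimately have "exp (- (1 / (1 + \<epsilon> / 2))) * a - a + (1 - 1 / exp 1 - \<epsilon>) * Ov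
      \<le> ((1 + u) * e - 1) * a + (1 - e - \<epsilon>) * Ov"
    unfolding u_def e_def by linarith
  also have "\<dots> \<le> ((1 + u) * e - 1) * ((1 - \<epsilon> / 3) * Ov) + (1 - e - \<epsilon>) * Ov"
    using mult_left_mono_neg[OF a neg] by simp
  also have "\<dots> = (u * e + \<epsilon> / 3 * (1 - e - u * e) - \<epsilon>) * Ov" by (simp add: field_simps)
  also have "\<dots> \<le> (\<epsilon> / 4 + \<epsilon> / 3 - \<epsilon>) * Ov"
  proof -
    have "u * e \<le> u * (1 / 2)" using u e by (intro mult_left_mono) auto
    moreover have "0 \<le> u * e" using u e by simp
    then have "\<epsilon> / 3 * (1 - e - u * e) \<le> \<epsilon> / 3" using \<epsilon> e by (intro mult_left_le) auto
    ultimately show ?thesis using Ov unfolding u_def by (intro mult_right_mono) auto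
  qed
  finally have bracket: "exp (- (1 / (1 + \<epsilon> / 2))) * a - a + (1 - 1 / exp 1 - \<epsilon>) * Ov
      \<le> - (5 / 12 * \<epsilon> * Ov)" by simp
  have factor: "\<epsilon> / 2 / (\<epsilon> ^ 2 / (36 * K) * Ov) = 18 * K / (\<epsilon> * Ov)"
    using \<epsilon> by (simp add: power2_eq_square)
  have "18 * K / (\<epsilon> * Ov) * (exp (- (1 / (1 + \<epsilon> / 2))) * a - a + (1 - 1 / exp 1 - \<epsilon>) * Ov)
      \<le> 18 * K / (\<epsilon> * Ov) * (- (5 / 12 * \<epsilon> * Ov))"
    using bracket K \<epsilon> Ov by (intro mult_left_mono) auto
  also have "\<dots> = - (15 / 2 * K)" using \<epsilon> Ov by simp
  also have "\<dots> \<le> - (2 * K)" using K by simp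
  finally show ?thesis unfolding factor .
qed

section \<open>Algorithm 2 on instances with small marginals\<close>

locale small_marginal_instance =
  fixes V :: "'v set" and D :: "'c set" and g :: "'c \<Rightarrow> 'v set \<Rightarrow> real"
    and sol :: "'v set \<Rightarrow> 'v \<Rightarrow> real" and b B k :: nat and Sst :: "'v set" and Ov \<epsilon> :: real
  assumes finite_V: "finite V"
    and finite_D: "finite D" and D_nonempty: "D \<noteq> {}" and card_D_le: "card D \<le> k" and two_le_k: "2 \<le> k"
    and mono_submod_g: "\<forall>c\<in>D. mono_submod V (g c)"
    and lp_optimal_sol: "\<forall>S\<subseteq>V. lp_optimal V g D b S (sol S)"
    and Sst: "Sst \<subseteq> V" "card Sst \<le> B" "\<forall>c\<in>D. Ov \<le> g c Sst"
    and Ov_pos: "0 < Ov"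
    and budget: "0 < B" "(1 - \<epsilon> / 3) * real B \<le> real b" "b \<le> B"
    and eps: "0 < \<epsilon>" "\<epsilon> < 1"
    and marg_small: "\<forall>c\<in>D. \<forall>S\<subseteq>V. \<forall>v\<in>V. marg (g c) {v} S \<le> \<epsilon> ^ 2 / (36 * ln (real k)) * Ov"
begin

lemma sol_in_prob_simplex: "\<forall>S\<subseteq>V. sol S \<in> prob_simplex V"
  using lp_optimal_sol unfolding lp_optimal_def by blast

lemma prob_run_color_below:
  assumes c: "c \<in> D"
  shows "measure_pmf.prob (alg2_run V sol b) {S. g c S < (1 - 1 / exp 1 - \<epsilon>) * Ov} \<le> 1 / real k ^ 2"
proof -
  define a where "a = real b / real B * Ov"
  define M where "M = \<epsilon> ^ 2 / (36 * ln (real k)) * Ov"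
  have gc: "mono_submod V (g c)" using mono_submod_g c by blast
  have lnk: "0 < ln (real k)" using two_le_k by simp
  have M: "0 < M" using eps lnk Ov_pos by (simp add: M_def)
  have "1 - \<epsilon> / 3 \<le> real b / real B" using budget by (simp add: field_simps)
  then have a: "(1 - \<epsilon> / 3) * Ov \<le> a" unfolding a_def using Ov_pos by (intro mult_right_mono) auto
  have "0 \<le> (1 - \<epsilon> / 3) * Ov" using eps Ov_pos by simp
  then have a0: "0 \<le> a" using a by linarith
  have "0 < (1 - \<epsilon> / 3) * real B" using eps budget by simp
  then have b: "0 < b" using budget by linarith
  have "measure_pmf.prob (alg2_run V sol b) {S. g c S < (1 - 1 / exp 1 - \<epsilon>) * Ov}
      \<le> exp (\<epsilon> / 2 / M * (exp (- (1 / (1 + \<epsilon> / 2))) * a - a + (1 - 1 / exp 1 - \<epsilon>) * Ov))"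
  proof (rule prob_alg2_run_below[OF finite_V sol_in_prob_simplex _ _ M _ b])
    show "0 \<le> g c {}" using mono_submod_nonneg[OF gc] by simp
    show "\<forall>S\<subseteq>V. \<forall>v\<in>V. 0 \<le> marg (g c) {v} S \<and> marg (g c) {v} S \<le> M"
      using marg_singleton_nonneg[OF gc] marg_small c unfolding M_def by blast
    show "\<forall>S\<subseteq>V. a \<le> real b * (\<Sum>v\<in>V. sol S v * marg (g c) {v} S) + g c S"
    proof (intro allI impI)
      fix S assume S: "S \<subseteq> V"
      have "lp_optimal V g D b S (sol S)" using lp_optimal_sol S by blast
      then show "a \<le> real b * (\<Sum>v\<in>V. sol S v * marg (g c) {v} S) + g c S"
        unfolding a_def by (rule lp_optimal_drift[OF finite_V finite_D c mono_submod_g Sst(1,2) budget(3)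
            less_imp_le[OF Ov_pos] Sst(3) S])
    qed
    show "0 \<le> \<epsilon> / 2" using eps by simp
    show "0 \<le> a" by (rule a0)
  qed
  also have "\<dots> \<le> exp (- (2 * ln (real k)))"
    unfolding M_def exp_le_cancel_iff by (rule concentration_exponent_le[OF eps lnk Ov_pos a])
  also have "\<dots> = 1 / real k ^ 2"
    using exp_of_nat_mult[of 2 "ln (real k)"] two_le_k by (simp add: exp_minus inverse_eq_divide)
  finally show ?thesis .
qed

lemma prob_run_below:
  "measure_pmf.prob (alg2_run V sol b) {S. Min ((\<lambda>c. g c S) ` D) < (1 - 1 / exp 1 - \<epsilon>) * Ov} \<le> 1 / 2"
proof -
  let ?\<tau> = "(1 - 1 / exp 1 - \<epsilon>) * Ov"
  have "{S. Min ((\<lambda>c. g c S) ` D) < ?\<tau>} = (\<Union>c\<in>D. {S. g c S < ?\<tau>})"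
    using finite_D D_nonempty by (auto simp: Min_less_iff)
  then have "measure_pmf.prob (alg2_run V sol b) {S. Min ((\<lambda>c. g c S) ` D) < ?\<tau>}
      \<le> (\<Sum>c\<in>D. measure_pmf.prob (alg2_run V sol b) {S. g c S < ?\<tau>})"
    using finite_D by (simp add: measure_pmf.finite_measure_subadditive_finite)
  also have "\<dots> \<le> (\<Sum>c\<in>D. 1 / real k ^ 2)" using prob_run_color_below by (intro sum_mono) auto
  also have "\<dots> \<le> real k / real k ^ 2" using card_D_le by (simp add: divide_right_mono)
  also have "\<dots> \<le> 1 / 2" using two_le_k by (simp add: power2_eq_square field_simps)
  finally show ?thesis .
qed

theorem alg2_success:
  assumes "0 < \<delta>"
  shows "1 - \<delta> \<le> measure_pmf.prob (alg2 V g D b \<delta> sol)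
           {S. S \<subseteq> V \<and> card S \<le> b \<and> (1 - 1 / exp 1 - \<epsilon>) * Ov \<le> Min ((\<lambda>c. g c S) ` D)}"
    (is "_ \<le> measure_pmf.prob ?P ?Good")
proof -
  let ?Bad = "{S. Min ((\<lambda>c. g c S) ` D) < (1 - 1 / exp 1 - \<epsilon>) * Ov}"
  have "measure_pmf.prob ?P ?Bad \<le> (1 / 2) ^ nat \<lceil>log 2 (2 / \<delta>)\<rceil>"
    unfolding alg2_def by (rule prob_alg2_rep_below[OF prob_run_below])
  also have "\<dots> \<le> \<delta>" using assms by (rule half_power_ceiling_log_le)
  finally have "1 - \<delta> \<le> measure_pmf.prob ?P (UNIV - ?Bad)"
    using measure_pmf.prob_compl[of ?Bad ?P] by simp
  also have "\<dots> = measure_pmf.prob ?P ((UNIV - ?Bad) \<inter> set_pmf ?P)" by (simp add: measure_Int_set_pmf)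
  also have "\<dots> \<le> measure_pmf.prob ?P ?Good"
  proof (rule measure_pmf.finite_measure_mono)
    show "(UNIV - ?Bad) \<inter> set_pmf ?P \<subseteq> ?Good"
      using set_pmf_alg2_rep[OF finite_V sol_in_prob_simplex] unfolding alg2_def by (force simp: not_less)
  qed simp
  finally show ?thesis .
qed

end

section \<open>Pre-processing followed by Algorithm 2\<close>

lemma Min_Un_ge_threshold:
  assumes C: "finite C" "C \<noteq> {}" and ms: "\<forall>c\<in>C. mono_submod V (f c)" and T: "T \<subseteq> V"
    and S: "S \<subseteq> V" and \<tau>: "\<tau> \<le> Ov"
    and residual: "\<forall>c\<in>C. f c T < Ov \<longrightarrow> \<tau> \<le> f c (S \<union> T)"
  shows "\<tau> \<le> Min ((\<lambda>c. f c (T \<union> S)) ` C)"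
proof -
  have "\<tau> \<le> f c (T \<union> S)" if c: "c \<in> C" for c
  proof (cases "f c T < Ov")
    case True
    then show ?thesis using residual c by (simp add: Un_commute)
  next
    case False
    then have "\<tau> \<le> f c T" using \<tau> by linarith
    also have "f c T \<le> f c (T \<union> S)" using mono_submod_mono[of V "f c" T "T \<union> S"] ms c T S by blast
    finally show ?thesis .
  qed
  then show ?thesis using C by simp
qed

lemma residual_small_marginal_instance:
  assumes V: "finite V" and C: "finite C" and ms: "\<forall>c\<in>C. mono_submod V (f c)" and k: "2 \<le> card C"
    and \<epsilon>: "0 < \<epsilon>" "\<epsilon> < 1" and B: "0 < B"
    and T: "T \<subseteq> V" "real (card T) \<le> \<epsilon> / 3 * real B"
    and margT: "\<forall>c\<in>C. \<forall>v\<in>V. real B' * marg (f c) {v} T \<le> f c T"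
    and B': "real B' = 1 / (\<epsilon> ^ 2 / (36 * ln (real (card C))))"
    and Sst: "Sst \<subseteq> V" "card Sst \<le> B" "\<forall>c\<in>C. Ov \<le> f c Sst"
    and Ct: "Ct = {c\<in>C. f c T < Ov}" "Ct \<noteq> {}"
    and lp: "\<forall>S\<subseteq>V. lp_optimal V (\<lambda>c A. f c (A \<union> T)) Ct (B - card T) S (sol S)"
  shows "small_marginal_instance V Ct (\<lambda>c A. f c (A \<union> T)) sol (B - card T) B (card C) Sst Ov \<epsilon>"
proof
  show "finite Ct" "card Ct \<le> card C" using C by (auto simp: Ct intro: card_mono)
  show "\<forall>c\<in>Ct. mono_submod V (\<lambda>A. f c (A \<union> T))" using ms T(1) Ct by (auto intro: mono_submod_Un_right)
  show "\<forall>c\<in>Ct. Ov \<le> f c (Sst \<union> T)"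
    using Sst ms T(1) Ct by (auto intro: order_trans[OF _ mono_submod_mono[of V _ Sst "Sst \<union> T"]])
  obtain c where c: "c \<in> C" "f c T < Ov" using Ct by auto
  then show "0 < Ov" using mono_submod_nonneg[of V "f c" T] ms T(1) by fastforce
  have "\<epsilon> / 3 * real B < real B" using \<epsilon> B by simp
  then have "card T < B" using T(2) by linarith
  then show "(1 - \<epsilon> / 3) * real B \<le> real (B - card T)" using T(2) by (simp add: of_nat_diff algebra_simps)
  show "\<forall>c\<in>Ct. \<forall>S\<subseteq>V. \<forall>v\<in>V.
      marg (\<lambda>A. f c (A \<union> T)) {v} S \<le> \<epsilon> ^ 2 / (36 * ln (real (card C))) * Ov"
  proof (intro ballI allI impI)
    fix d S v assume d: "d \<in> Ct" and S: "S \<subseteq> V" and v: "v \<in> V"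
    have fd: "mono_submod V (f d)" "d \<in> C" "f d T < Ov" using d ms Ct by auto
    have "marg (\<lambda>A. f d (A \<union> T)) {v} S = marg (f d) {v} (S \<union> T)" by (simp add: marg_singleton)
    also have "\<dots> \<le> marg (f d) {v} T" using marg_singleton_antimono[OF fd(1) _ _ v] S T(1) by blast
    also have "\<dots> \<le> f d T / real B'"
      using margT fd v \<epsilon> k by (simp add: B' field_simps)
    also have "\<dots> \<le> Ov / real B'" using fd(3) by (simp add: divide_right_mono)
    also have "\<dots> = \<epsilon> ^ 2 / (36 * ln (real (card C))) * Ov" by (simp add: B')
    finally show "marg (\<lambda>A. f d (A \<union> T)) {v} S \<le> \<epsilon> ^ 2 / (36 * ln (real (card C))) * Ov" .
  qed
qed (use assms in auto)

theorem theorem2: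
  fixes V :: "'v set" and C :: "'c set" and f :: "'c \<Rightarrow> 'v set \<Rightarrow> real"
    and B B' :: nat and \<epsilon> \<delta> :: real
    and cs :: "'c list" and sel :: "'c \<Rightarrow> 'v set \<Rightarrow> 'v" and sol :: "'v set \<Rightarrow> 'v \<Rightarrow> real"
  assumes "finite V" and "V \<noteq> {}" and "finite C" and "C \<noteq> {}"
    and "\<forall>c\<in>C. mono_submod V (f c)"
    and "0 < B"
    and "card C \<ge> 2"
    and "0 < \<epsilon>" and "\<epsilon> < 1" and "0 < \<delta>" and "\<delta> < 1"
    and "real B \<ge> 108 * real (card C) / \<epsilon> ^ 3 * ln (real (card C))"
    and "real B' = 1 / (\<epsilon> ^ 2 / (36 * ln (real (card C))))"
    and "distinct cs" and "set cs = C"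
    and "\<forall>c\<in>C. \<forall>T\<subseteq>V. greedy_choice V (f c) T (sel c T)"
  defines "T \<equiv> preprocess sel cs B'"
    and "Ct \<equiv> {c\<in>C. f c (preprocess sel cs B') < OPT V C f B}"
    and "g \<equiv> (\<lambda>c A. f c (A \<union> preprocess sel cs B'))"
  assumes "Ct \<noteq> {} \<longrightarrow> (\<forall>S\<subseteq>V. lp_optimal V g Ct (B - card T) S (sol S))"
  shows "measure_pmf.prob
           (if Ct = {} then return_pmf {} else alg2 V g Ct (B - card T) \<delta> sol)
           {S. (1 - 1 / exp 1 - \<epsilon>) * OPT V C f B \<le> Min ((\<lambda>c. f c (T \<union> S)) ` C)
               \<and> card (T \<union> S) \<le> B}
         \<ge> 1 - \<delta>"
proof -
  let ?Ov = "OPT V C f B"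
  let ?\<tau> = "(1 - 1 / exp 1 - \<epsilon>) * ?Ov"
  let ?Event = "{S. ?\<tau> \<le> Min ((\<lambda>c. f c (T \<union> S)) ` C) \<and> card (T \<union> S) \<le> B}"
  have T: "T \<subseteq> V" and cardT: "real (card T) \<le> \<epsilon> / 3 * real B"
    and margT: "\<forall>c\<in>C. \<forall>v\<in>V. real B' * marg (f c) {v} T \<le> f c T"
    unfolding T_def by (rule preprocess_guarantees; rule assms)+
  obtain Sst where Sst: "Sst \<subseteq> V" "card Sst \<le> B" "Min ((\<lambda>c. f c Sst) ` C) = ?Ov"
    using OPT_attained[OF \<open>finite V\<close>] by blast
  have Sst_ge: "\<forall>c\<in>C. ?Ov \<le> f c Sst"
    unfolding Sst(3)[symmetric] using \<open>finite C\<close> by (auto intro!: Min_le)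
  have "0 \<le> ?Ov" by (rule OPT_nonneg) (rule assms)+
  moreover have "1 - 1 / exp 1 - \<epsilon> \<le> 1" using \<open>0 < \<epsilon>\<close> exp_gt_zero[of 1] by (smt (verit) divide_pos_pos)
  ultimately have \<tau>: "?\<tau> \<le> ?Ov" using mult_right_mono[of "1 - 1 / exp 1 - \<epsilon>" 1 ?Ov] by simp
  have Ct: "Ct = {c\<in>C. f c T < ?Ov}" by (simp add: Ct_def T_def)
  have event: "S \<in> ?Event" if "S \<subseteq> V" "card S \<le> B - card T" "\<forall>c\<in>Ct. ?\<tau> \<le> g c S" for S
  proof -
    have "?\<tau> \<le> Min ((\<lambda>c. f c (T \<union> S)) ` C)"
      using Min_Un_ge_threshold[OF assms(3,4,5) T that(1) \<tau>] that(3) by (simp add: Ct g_def T_def)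
    moreover have "\<epsilon> / 3 * real B \<le> real B" using \<open>0 < \<epsilon>\<close> \<open>\<epsilon> < 1\<close> by (intro mult_left_le_one_le) auto
    then have "card T \<le> B" using cardT by (simp only: of_nat_le_iff[symmetric])
    then have "card (T \<union> S) \<le> B" using card_Un_le[of T S] that(2) by linarith
    ultimately show ?thesis by simp
  qed
  show ?thesis
  proof (cases "Ct = {}")
    case True
    then show ?thesis using event[of "{}"] \<open>0 < \<delta>\<close> by simp
  next
    case False
    have lp: "\<forall>S\<subseteq>V. lp_optimal V (\<lambda>c A. f c (A \<union> T)) Ct (B - card T) S (sol S)"
      using False \<open>Ct \<noteq> {} \<longrightarrow> (\<forall>S\<subseteq>V. lp_optimal V g Ct (B - card T) S (sol S))\<close>
      by (simp add: g_def T_def)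
    interpret small_marginal_instance V Ct g sol "B - card T" B "card C" Sst ?Ov \<epsilon>
      unfolding g_def T_def[symmetric]
      by (rule residual_small_marginal_instance[OF _ _ _ _ _ _ _ T cardT margT _ Sst(1,2) Sst_ge Ct
            False lp]) (rule assms)+
    have "1 - \<delta> \<le> measure_pmf.prob (alg2 V g Ct (B - card T) \<delta> sol)
        {S. S \<subseteq> V \<and> card S \<le> B - card T \<and> ?\<tau> \<le> Min ((\<lambda>c. g c S) ` Ct)}"
      using \<open>0 < \<delta>\<close> by (rule alg2_success)
    also have "\<dots> \<le> measure_pmf.prob (alg2 V g Ct (B - card T) \<delta> sol) ?Event"
      using event finite_D False by (intro measure_pmf.finite_measure_mono) auto
    finally show ?thesis using False by simp
  qed
qed

end
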